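(* Consider the replace-after-fixed-time process with parameters $\lambda>0$, $r>0$, and its counts $A(t)$, $D(t)$ as defined in the context. Let $j\in\{0,1,2,\ldots\}$ and $t$ with $jr\le t<(j+1)r$. Then for $k=0,1,\ldots,j$ and $l=0,1,2,\ldots$, \[ \Pr(A(t)=k,\ D(t)=l)=e^{-\lambda t}\binom{k+l}{k}\sum_{i=0}^{j-k}(-1)^i\binom{l+1}{i}\frac{(\lambda(t-(i+k)r))^l}{l!}. \]
   Context: Let $X_1,X_2,\ldots$ be independent random variables, each exponentially distributed with rate $\lambda>0$ (density $\lambda e^{-\lambda x}$ for $x>0$). Fix $r>0$ and set $Y_k=\min(X_k,r)$. For $t\ge 0$ let $N(t)=\max\{n\ge 0:\sum_{k=1}^n Y_k\le t\}$ (the replace-after-fixed-time, or RaFT, process). Write $N(t)=A(t)+D(t)$, where $A(t)=\#\{k\le N(t): X_k>r\}$ (components replaced while still functioning) and $D(t)=\#\{k\le N(t): X_k\le r\}$ (components replaced because they failed). Binomial coefficients $\binom{a}{b}$ with $b>a$ are $0$. *)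

theory Defs
  imports "HOL-Probability.Probability"
begin

text \<open>Replace-after-fixed-time process. Lifetimes are indexed from 0:
  X 0, X 1, ... correspond to the paper's X_1, X_2, ...; Y_k = min (X k) r.\<close>

definition RaFT_N :: "(nat \<Rightarrow> 'a \<Rightarrow> real) \<Rightarrow> real \<Rightarrow> real \<Rightarrow> 'a \<Rightarrow> nat" where
  "RaFT_N X r t \<omega> =
     (let S = {n. (\<Sum>k<n. min (X k \<omega>) r) \<le> t} in if finite S then Max S else 0)"

definition RaFT_A :: "(nat \<Rightarrow> 'a \<Rightarrow> real) \<Rightarrow> real \<Rightarrow> real \<Rightarrow> 'a \<Rightarrow> nat" where
  "RaFT_A X r t \<omega> = card {k. k < RaFT_N X r t \<omega> \<and> X k \<omega> > r}"

definition RaFT_D :: "(nat \<Rightarrow> 'a \<Rightarrow> real) \<Rightarrow> real \<Rightarrow> real \<Rightarrow> 'a \<Rightarrow> nat" where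
  "RaFT_D X r t \<omega> = card {k. k < RaFT_N X r t \<omega> \<and> X k \<omega> \<le> r}"

end

theory Submission
  imports Defs
begin

text \<open>Given that exactly \<open>n = k + l\<close> replacements happen by time \<open>t\<close>, the event
  \<open>A(t) = k, D(t) = l\<close> says that exactly \<open>k\<close> of the first \<open>n\<close> lifetimes exceed \<open>r\<close> and
  that \<open>S\<^sub>n \<le> t < S\<^sub>n\<^sub>+\<^sub>1\<close> for the partial sums \<open>S\<^sub>m\<close> of the \<open>Y\<^sub>i\<close>. Integrating out the
  \<open>(n+1)\<close>-st lifetime leaves \<open>exp (-\<lambda> t)\<close> times the integral of \<open>exp (\<lambda> S\<^sub>n)\<close> over the
  window \<open>t - r < S\<^sub>n \<le> t\<close>. Against the exponential density the factor \<open>exp (\<lambda> S\<^sub>n)\<close>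
  turns each lifetime above \<open>r\<close> into an atom of mass \<open>1\<close> and each lifetime in \<open>[0, r]\<close>
  into \<open>\<lambda>\<close> times Lebesgue measure, so the integral is \<open>C(n,k) \<lambda>\<^sup>l\<close> times the volume of
  the part of the cube \<open>[0, r]\<^sup>l\<close> whose coordinate sum lies in \<open>(t - kr - r, t - kr]\<close>.
  Inclusion--exclusion over the faces of the cube gives the alternating sum, which stops at
  \<open>i = j - k\<close> because \<open>t < (j + 1) r\<close>. That almost surely only finitely many
  replacements happen before \<open>t\<close> follows from a Chernoff bound on \<open>S\<^sub>m\<close>.\<close>

section \<open>Truncated powers and the Irwin--Hall volume\<close>

definition truncated_power :: "nat \<Rightarrow> real \<Rightarrow> real" where
  "truncated_power l y = (if 0 \<le> y then y ^ l / fact l else 0)"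

lemma truncated_power_nonneg: "0 \<le> truncated_power l y"
  by (simp add: truncated_power_def)

lemma truncated_power_Suc: "truncated_power (Suc l) y = (max y 0) ^ Suc l / fact (Suc l)"
  by (simp add: truncated_power_def max_def)

lemma continuous_on_truncated_power_Suc: "continuous_on A (truncated_power (Suc l))"
  unfolding truncated_power_Suc[abs_def] by (intro continuous_intros) auto

lemma truncated_power_has_derivative:
  assumes "y \<noteq> 0"
  shows "(truncated_power (Suc l) has_real_derivative truncated_power l y) (at y)"
proof (cases "y > 0")
  case True
  have "fact (Suc l) = (real (Suc l) * fact l :: real)"
    by (simp only: fact_Suc of_nat_mult)
  then have eq: "real (Suc l) * y ^ l / fact (Suc l) = truncated_power l y"
    using True by (simp add: truncated_power_def)
  have "((\<lambda>z. z ^ Suc l) has_real_derivative real (Suc l) * y ^ l) (at y)"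
    using DERIV_pow[of "Suc l" y] by simp
  then have "((\<lambda>z. z ^ Suc l / fact (Suc l)) has_real_derivative truncated_power l y) (at y)"
    unfolding eq[symmetric] by (rule DERIV_cdivide)
  then show ?thesis
    by (rule has_field_derivative_transform_within_open[of _ _ _ "{0<..}"])
      (use True in \<open>auto simp: truncated_power_def\<close>)
next
  case False
  with assms have "y < 0" by auto
  have "((\<lambda>_. 0) has_real_derivative truncated_power l y) (at y)"
    using \<open>y < 0\<close> by (simp add: truncated_power_def)
  then show ?thesis
    by (rule has_field_derivative_transform_within_open[of _ _ _ "{..<0}"])
      (use \<open>y < 0\<close> in \<open>auto simp: truncated_power_def\<close>)
qed

lemma truncated_power_has_integral:
  assumes "0 \<le> r"
  shows "((\<lambda>y. truncated_power l (c - y)) has_integral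
           truncated_power (Suc l) c - truncated_power (Suc l) (c - r)) {0..r}"
proof -
  have "((\<lambda>y. truncated_power l (c - y)) has_integral
      ((\<lambda>y. - truncated_power (Suc l) (c - y)) r - (\<lambda>y. - truncated_power (Suc l) (c - y)) 0)) {0..r}"
  proof (rule fundamental_theorem_of_calculus_interior_strong[where S="{c}"])
    show "finite {c}" "0 \<le> r" using assms by auto
  next
    fix x assume x: "x \<in> {0<..<r} - {c}"
    have "((\<lambda>y. - truncated_power (Suc l) (c - y)) has_real_derivative truncated_power l (c - x)) (at x)"
      using truncated_power_has_derivative[of "c - x" l] x
      by (auto intro!: derivative_eq_intros DERIV_chain2[where f="truncated_power (Suc l)"])
    then show "((\<lambda>y. - truncated_power (Suc l) (c - y)) has_vector_derivative truncated_power l (c - x)) (at x)"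
      by (simp add: has_real_derivative_iff_has_vector_derivative)
  next
    show "continuous_on {0..r} (\<lambda>y. - truncated_power (Suc l) (c - y))"
      by (intro continuous_intros continuous_on_compose2[OF continuous_on_truncated_power_Suc]) auto
  qed
  then show ?thesis by simp
qed

lemma sum_alternating_choose_Suc:
  fixes f :: "nat \<Rightarrow> real"
  shows "(\<Sum>i\<le>Suc l. (-1)^i * real (Suc l choose i) * f i)
       = (\<Sum>i\<le>l. (-1)^i * real (l choose i) * (f i - f (Suc i)))"
proof -
  have shifted: "(\<Sum>i\<le>l. (-1)^i * real (l choose i) * f i)
      = f 0 + (\<Sum>i\<le>l. (-1)^(Suc i) * real (l choose Suc i) * f (Suc i))"
  proof (cases l)
    case (Suc m)
    show ?thesis unfolding Suc
      by (subst sum.atMost_Suc_shift) (simp add: sum.atMost_Suc binomial_eq_0)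
  qed simp
  have "(\<Sum>i\<le>Suc l. (-1)^i * real (Suc l choose i) * f i)
      = f 0 + (\<Sum>i\<le>l. (-1)^(Suc i) * real (l choose i) * f (Suc i))
            + (\<Sum>i\<le>l. (-1)^(Suc i) * real (l choose Suc i) * f (Suc i))"
    by (subst sum.atMost_Suc_shift) (simp add: sum.distrib algebra_simps sum_subtractf sum_negf)
  also have "\<dots> = (\<Sum>i\<le>l. (-1)^i * real (l choose i) * f i)
                  - (\<Sum>i\<le>l. (-1)^i * real (l choose i) * f (Suc i))"
    unfolding shifted by (simp add: sum_negf[symmetric])
  also have "\<dots> = (\<Sum>i\<le>l. (-1)^i * real (l choose i) * (f i - f (Suc i)))"
    by (simp add: right_diff_distrib sum_subtractf)
  finally show ?thesis .
qed

text \<open>The volume of \<open>{y \<in> [0,r]\<^sup>l. y\<^sub>1 + \<dots> + y\<^sub>l \<le> w}\<close>, i.e. \<open>r\<^sup>l\<close> times the Irwin--Hall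
  distribution function.\<close>

definition irwin_hall :: "real \<Rightarrow> nat \<Rightarrow> real \<Rightarrow> real" where
  "irwin_hall r l w = (\<Sum>i\<le>l. (-1)^i * real (l choose i) * truncated_power l (w - real i * r))"

lemma irwin_hall_diff:
  "irwin_hall r l w - irwin_hall r l (w - r)
     = (\<Sum>i\<le>Suc l. (-1)^i * real (Suc l choose i) * truncated_power l (w - real i * r))"
proof -
  have "(\<Sum>i\<le>Suc l. (-1)^i * real (Suc l choose i) * truncated_power l (w - real i * r))
     = (\<Sum>i\<le>l. (-1)^i * real (l choose i) *
          (truncated_power l (w - real i * r) - truncated_power l (w - real (Suc i) * r)))"
    by (rule sum_alternating_choose_Suc)
  also have "\<dots> = irwin_hall r l w - irwin_hall r l (w - r)"
    unfolding irwin_hall_def by (simp add: right_diff_distrib sum_subtractf algebra_simps)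
  finally show ?thesis ..
qed

lemma irwin_hall_has_integral:
  assumes "0 \<le> r"
  shows "((\<lambda>y. irwin_hall r l (w - y)) has_integral irwin_hall r (Suc l) w) {0..r}"
proof -
  have "((\<lambda>y. irwin_hall r l (w - y)) has_integral
     (\<Sum>i\<le>l. (-1)^i * real (l choose i) *
        (truncated_power (Suc l) (w - real i * r) - truncated_power (Suc l) (w - real i * r - r)))) {0..r}"
    unfolding irwin_hall_def
  proof (intro has_integral_sum has_integral_mult_right)
    fix i
    show "((\<lambda>y. truncated_power l (w - y - real i * r)) has_integral
        truncated_power (Suc l) (w - real i * r) - truncated_power (Suc l) (w - real i * r - r)) {0..r}"
      using truncated_power_has_integral[OF assms, of l "w - real i * r"] by (simp add: algebra_simps)
  qed simp
  also have "(\<Sum>i\<le>l. (-1)^i * real (l choose i) *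
        (truncated_power (Suc l) (w - real i * r) - truncated_power (Suc l) (w - real i * r - r)))
      = irwin_hall r (Suc l) w"
    unfolding irwin_hall_def sum_alternating_choose_Suc[where f="\<lambda>i. truncated_power (Suc l) (w - real i * r)"]
    by (simp add: algebra_simps)
  finally show ?thesis .
qed

lemma irwin_hall_nonneg:
  assumes "0 \<le> r"
  shows "0 \<le> irwin_hall r l w"
proof (induction l arbitrary: w)
  case 0
  then show ?case by (simp add: irwin_hall_def truncated_power_nonneg)
next
  case (Suc l)
  show ?case
    by (rule has_integral_nonneg[OF irwin_hall_has_integral[OF assms]]) (use Suc in auto)
qed

section \<open>Products of exponential distributions\<close>

definition exponential_measure :: "real \<Rightarrow> real measure" where
  "exponential_measure lam = density lborel (\<lambda>x. ennreal (exponential_density lam x))"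

definition exponential_product :: "real \<Rightarrow> nat \<Rightarrow> (nat \<Rightarrow> real) measure" where
  "exponential_product lam n = PiM {..<n} (\<lambda>_. exponential_measure lam)"

definition count_above :: "real \<Rightarrow> nat \<Rightarrow> (nat \<Rightarrow> real) \<Rightarrow> real" where
  "count_above r n x = (\<Sum>i<n. if r < x i then 1 else 0)"

definition trunc_sum :: "real \<Rightarrow> nat \<Rightarrow> (nat \<Rightarrow> real) \<Rightarrow> real" where
  "trunc_sum r n x = (\<Sum>i<n. min (x i) r)"

lemma sets_exponential_measure [measurable_cong]: "sets (exponential_measure lam) = sets borel"
  by (simp add: exponential_measure_def)

lemma space_exponential_measure [simp]: "space (exponential_measure lam) = UNIV"
  by (simp add: exponential_measure_def)

lemma prob_space_exponential_measure: "0 < lam \<Longrightarrow> prob_space (exponential_measure lam)"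
  unfolding exponential_measure_def by (rule prob_space_exponential_density)

lemma prob_space_exponential_product: "0 < lam \<Longrightarrow> prob_space (exponential_product lam n)"
  unfolding exponential_product_def by (intro prob_space_PiM prob_space_exponential_measure)

lemma measurable_count_above [measurable]:
  "count_above r n \<in> borel_measurable (PiM {..<n} (\<lambda>_. exponential_measure lam))"
  "count_above r n \<in> borel_measurable (PiM {..<Suc n} (\<lambda>_. exponential_measure lam))"
  unfolding count_above_def by (intro borel_measurable_sum; measurable)+

lemma measurable_trunc_sum [measurable]:
  "trunc_sum r n \<in> borel_measurable (PiM {..<n} (\<lambda>_. exponential_measure lam))"
  "trunc_sum r n \<in> borel_measurable (PiM {..<Suc n} (\<lambda>_. exponential_measure lam))"
  unfolding trunc_sum_def by (intro borel_measurable_sum; measurable)+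

lemma count_above_nonneg: "0 \<le> count_above r n x"
  unfolding count_above_def by (intro sum_nonneg) auto

lemma count_above_upd: "count_above r n (x(n := y)) = count_above r n x"
  unfolding count_above_def by (intro sum.cong) auto

lemma trunc_sum_upd: "trunc_sum r n (x(n := y)) = trunc_sum r n x"
  unfolding trunc_sum_def by (intro sum.cong) auto

lemma count_above_Suc_upd:
  "count_above r (Suc n) (x(n := y)) = count_above r n x + (if r < y then 1 else 0)"
  unfolding count_above_def by (simp add: sum.lessThan_Suc)

lemma trunc_sum_Suc_upd: "trunc_sum r (Suc n) (x(n := y)) = trunc_sum r n x + min y r"
  unfolding trunc_sum_def by (simp add: sum.lessThan_Suc)

lemma trunc_sum_mono:
  assumes "0 \<le> r" "\<forall>i. 0 \<le> x i" "m \<le> n"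
  shows "trunc_sum r m x \<le> trunc_sum r n x"
  unfolding trunc_sum_def using assms by (intro sum_mono2) auto

lemma emeasure_exponential_greater:
  assumes "0 < lam" "0 \<le> a"
  shows "emeasure (exponential_measure lam) {a<..} = ennreal (exp (- a * lam))"
proof -
  interpret prob_space "exponential_measure lam"
    using prob_space_exponential_measure[OF assms(1)] .
  have "distributed (exponential_measure lam) lborel (\<lambda>x. x) (exponential_density lam)"
    unfolding distributed_def exponential_measure_def by (subst distr_id2) auto
  then have "prob {x \<in> space (exponential_measure lam). a < x} = exp (- a * lam)"
    by (rule exponential_distributedD_gt[OF _ assms(2,1)])
  moreover have "{x \<in> space (exponential_measure lam). a < x} = {a<..}" by auto
  ultimately show ?thesis by (simp add: emeasure_eq_measure)
qed

lemma nn_integral_exponential_product_Suc: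
  assumes "0 < lam" "f \<in> borel_measurable (exponential_product lam (Suc n))"
  shows "(\<integral>\<^sup>+x. f x \<partial>exponential_product lam (Suc n))
       = (\<integral>\<^sup>+x. (\<integral>\<^sup>+y. f (x(n := y)) \<partial>exponential_measure lam) \<partial>exponential_product lam n)"
proof -
  interpret product_sigma_finite "\<lambda>_::nat. exponential_measure lam"
    using prob_space_imp_sigma_finite[OF prob_space_exponential_measure[OF assms(1)]]
    by (simp add: product_sigma_finite_def)
  show ?thesis
    using assms(2) unfolding exponential_product_def lessThan_Suc
    by (rule product_nn_integral_insert[rotated 2]) auto
qed

lemma nn_integral_exponential_tilted:
  assumes lam: "0 < lam" and r: "0 \<le> r" and g: "g \<in> borel_measurable borel"
  shows "(\<integral>\<^sup>+y. (if r < y then c else g y) * ennreal (exp (lam * min y r)) \<partial>exponential_measure lam)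
       = c + ennreal lam * (\<integral>\<^sup>+y. indicator {0..r} y * g y \<partial>lborel)"
proof -
  have split: "(if r < y then c else g y) * ennreal (exp (lam * min y r))
      = c * ennreal (exp (lam * r)) * indicator {r<..} y + indicator {..r} y * (g y * ennreal (exp (lam * y)))"
    for y by (auto simp: indicator_def min_def)
  have "(\<integral>\<^sup>+y. c * ennreal (exp (lam * r)) * indicator {r<..} y \<partial>exponential_measure lam) = c"
    using emeasure_exponential_greater[OF lam r]
    by (subst nn_integral_cmult_indicator)
       (auto simp: mult.assoc ennreal_mult'[symmetric] mult_exp_exp)
  moreover have "(\<integral>\<^sup>+y. indicator {..r} y * (g y * ennreal (exp (lam * y))) \<partial>exponential_measure lam)
      = (\<integral>\<^sup>+y. ennreal lam * (indicator {0..r} y * g y) \<partial>lborel)"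
    unfolding exponential_measure_def using g
  proof (subst nn_integral_density, simp_all, intro nn_integral_cong)
    fix y :: real
    have "exp (- y * lam) * exp (lam * y) = 1"
      by (simp add: mult_exp_exp)
    then show "ennreal (exponential_density lam y) * (indicator {..r} y * (g y * ennreal (exp (lam * y))))
        = ennreal lam * (indicator {0..r} y * g y)"
      unfolding exponential_density_def
      by (auto simp: indicator_def ennreal_mult'[symmetric] mult_ac)
  qed
  ultimately show ?thesis
    unfolding split using g
    by (subst nn_integral_add) (auto simp: nn_integral_cmult)
qed

section \<open>The tilted mass\<close>

definition tilted_weight :: "real \<Rightarrow> real \<Rightarrow> nat \<Rightarrow> nat \<Rightarrow> real \<Rightarrow> (nat \<Rightarrow> real) \<Rightarrow> ennreal" where
  "tilted_weight lam r n k v x =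
     (if count_above r n x = real k \<and> trunc_sum r n x \<le> v
      then ennreal (exp (lam * trunc_sum r n x)) else 0)"

definition tilted_mass :: "real \<Rightarrow> real \<Rightarrow> nat \<Rightarrow> nat \<Rightarrow> real \<Rightarrow> ennreal" where
  "tilted_mass lam r n k v = (\<integral>\<^sup>+x. tilted_weight lam r n k v x \<partial>exponential_product lam n)"

definition tilted_mass_formula :: "real \<Rightarrow> real \<Rightarrow> nat \<Rightarrow> nat \<Rightarrow> real \<Rightarrow> real" where
  "tilted_mass_formula lam r n k v =
     real (n choose k) * lam ^ (n - k) * irwin_hall r (n - k) (v - real k * r)"

lemma measurable_tilted_weight [measurable]:
  "tilted_weight lam r n k v \<in> borel_measurable (PiM {..<n} (\<lambda>_. exponential_measure lam))"
  "tilted_weight lam r n k v \<in> borel_measurable (PiM {..<Suc n} (\<lambda>_. exponential_measure lam))"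
  unfolding tilted_weight_def[abs_def] by (measurable, measurable)

lemma nn_integral_tilted_weight_Suc:
  assumes lam: "0 < lam" and r: "0 < r"
  shows "(\<integral>\<^sup>+y. tilted_weight lam r (Suc n) k v (x(n := y)) \<partial>exponential_measure lam)
       = (if k = 0 then 0 else tilted_weight lam r n (k - 1) (v - r) x)
         + ennreal lam * (\<integral>\<^sup>+y. indicator {0..r} y * tilted_weight lam r n k (v - y) x \<partial>lborel)"
proof -
  have "tilted_weight lam r (Suc n) k v (x(n := y))
      = (if r < y then (if k = 0 then 0 else tilted_weight lam r n (k - 1) (v - r) x)
         else tilted_weight lam r n k (v - y) x) * ennreal (exp (lam * min y r))" for y
  proof (cases "r < y")
    case True
    have "count_above r n x + 1 = real k \<longleftrightarrow> k \<noteq> 0 \<and> count_above r n x = real (k - 1)"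
      using count_above_nonneg[of r n x] by (cases k) auto
    with True show ?thesis
      unfolding tilted_weight_def count_above_Suc_upd trunc_sum_Suc_upd
      by (simp add: ennreal_mult'[symmetric] mult_exp_exp add_ac le_diff_eq distrib_left)
  next
    case False
    then show ?thesis
      unfolding tilted_weight_def count_above_Suc_upd trunc_sum_Suc_upd
      by (simp add: ennreal_mult'[symmetric] mult_exp_exp add_ac le_diff_eq distrib_left)
  qed
  moreover have "(\<lambda>y. tilted_weight lam r n k (v - y) x) \<in> borel_measurable borel"
    unfolding tilted_weight_def by measurable
  ultimately show ?thesis
    using lam r by (simp add: nn_integral_exponential_tilted)
qed

lemma tilted_mass_Suc:
  assumes lam: "0 < lam" and r: "0 < r"
  shows "tilted_mass lam r (Suc n) k v
       = (if k = 0 then 0 else tilted_mass lam r n (k - 1) (v - r))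
         + ennreal lam * (\<integral>\<^sup>+y. indicator {0..r} y * tilted_mass lam r n k (v - y) \<partial>lborel)"
proof -
  interpret pair_sigma_finite "exponential_product lam n" lborel
    using prob_space_imp_sigma_finite[OF prob_space_exponential_product[OF lam]]
    by (simp add: pair_sigma_finite_def lborel.sigma_finite_measure_axioms)
  have [measurable]: "(\<lambda>x. \<integral>\<^sup>+y. indicator {0..r} y * tilted_weight lam r n k (v - y) x \<partial>lborel)
      \<in> borel_measurable (PiM {..<n} (\<lambda>_. exponential_measure lam))"
    unfolding tilted_weight_def by measurable
  have "tilted_mass lam r (Suc n) k v
      = (\<integral>\<^sup>+x. (\<integral>\<^sup>+y. tilted_weight lam r (Suc n) k v (x(n := y)) \<partial>exponential_measure lam)
           \<partial>exponential_product lam n)"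
    unfolding tilted_mass_def
    by (rule nn_integral_exponential_product_Suc[OF lam]) (unfold exponential_product_def, measurable)
  also have "\<dots> = (if k = 0 then 0 else tilted_mass lam r n (k - 1) (v - r)) + ennreal lam *
      (\<integral>\<^sup>+x. (\<integral>\<^sup>+y. indicator {0..r} y * tilted_weight lam r n k (v - y) x \<partial>lborel) \<partial>exponential_product lam n)"
  proof -
    have "(\<lambda>x. if k = 0 then 0 else tilted_weight lam r n (k - 1) (v - r) x)
        \<in> borel_measurable (PiM {..<n} (\<lambda>_. exponential_measure lam))"
      by measurable
    then show ?thesis
      unfolding nn_integral_tilted_weight_Suc[OF lam r] tilted_mass_def exponential_product_def
      by (simp add: nn_integral_add nn_integral_cmult)
  qed
  also have "(\<integral>\<^sup>+x. (\<integral>\<^sup>+y. indicator {0..r} y * tilted_weight lam r n k (v - y) x \<partial>lborel) \<partial>exponential_product lam n)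
      = (\<integral>\<^sup>+y. (\<integral>\<^sup>+x. indicator {0..r} y * tilted_weight lam r n k (v - y) x \<partial>exponential_product lam n) \<partial>lborel)"
    by (rule Fubini'[symmetric]) (unfold tilted_weight_def exponential_product_def, measurable)
  also have "\<dots> = (\<integral>\<^sup>+y. indicator {0..r} y * tilted_mass lam r n k (v - y) \<partial>lborel)"
    unfolding tilted_mass_def exponential_product_def
    by (intro nn_integral_cong) (simp add: nn_integral_cmult)
  finally show ?thesis .
qed

lemma tilted_mass_formula_nonneg: "0 \<le> r \<Longrightarrow> 0 < lam \<Longrightarrow> 0 \<le> tilted_mass_formula lam r n k v"
  unfolding tilted_mass_formula_def using irwin_hall_nonneg[of r] by simp

lemma tilted_mass_formula_Suc:
  "(if k = 0 then 0 else tilted_mass_formula lam r n (k - 1) (v - r))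
      + lam * (real (n choose k) * lam ^ (n - k) * irwin_hall r (Suc (n - k)) (v - real k * r))
    = tilted_mass_formula lam r (Suc n) k v"
proof (cases k)
  case (Suc k')
  have shift: "v - r - real k' * r = v - (1 + real k') * r"
    by (simp add: algebra_simps)
  show ?thesis
  proof (cases "k' < n")
    case True
    then have "Suc (n - Suc k') = n - k'" by auto
    moreover have "lam ^ (n - k') = lam * lam ^ (n - Suc k')"
      by (metis \<open>Suc (n - Suc k') = n - k'\<close> power_Suc)
    ultimately show ?thesis
      unfolding Suc by (simp add: tilted_mass_formula_def shift algebra_simps)
  next
    case False
    then have vanishing: "n choose Suc k' = 0" by simp
    show ?thesis
      unfolding Suc by (simp add: tilted_mass_formula_def shift vanishing)
  qed
qed (simp add: tilted_mass_formula_def)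

lemma tilted_mass_eq:
  assumes lam: "0 < lam" and r: "0 < r"
  shows "tilted_mass lam r n k v = ennreal (tilted_mass_formula lam r n k v)"
proof (induction n arbitrary: k v)
  case 0
  have "tilted_mass lam r 0 k v = (if k = 0 \<and> 0 \<le> v then 1 else 0)"
    unfolding tilted_mass_def tilted_weight_def exponential_product_def count_above_def trunc_sum_def
    by (auto simp: PiM_empty nn_integral_count_space_finite)
  then show ?case
    by (cases k) (auto simp: tilted_mass_formula_def irwin_hall_def truncated_power_def)
next
  case (Suc n)
  define c where "c = real (n choose k) * lam ^ (n - k)"
  have "((\<lambda>y. tilted_mass_formula lam r n k (v - y)) has_integral
      c * irwin_hall r (Suc (n - k)) (v - real k * r)) {0..r}"
    unfolding tilted_mass_formula_def c_def
    using has_integral_mult_right[OF irwin_hall_has_integral[of r "n - k" "v - real k * r"], of c] r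
    by (simp add: algebra_simps c_def)
  then have "(\<integral>\<^sup>+y. indicator {0..r} y * tilted_mass lam r n k (v - y) \<partial>lborel)
      = ennreal (c * irwin_hall r (Suc (n - k)) (v - real k * r))"
    unfolding Suc.IH
    by (subst mult.commute, intro nn_integral_has_integral_lebesgue')
       (use tilted_mass_formula_nonneg lam r in auto)
  moreover have "0 \<le> c * irwin_hall r (Suc (n - k)) (v - real k * r)"
    using irwin_hall_nonneg[of r] lam r by (simp add: c_def)
  ultimately show ?case
    unfolding tilted_mass_Suc[OF lam r] Suc.IH tilted_mass_formula_Suc[symmetric] c_def
    using tilted_mass_formula_nonneg lam r
    by (auto simp: ennreal_plus[symmetric] ennreal_mult[symmetric] simp del: ennreal_plus)
qed

lemma tilted_mass_formula_mono:
  assumes "0 < lam" "0 < r" "v \<le> w"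
  shows "tilted_mass_formula lam r n k v \<le> tilted_mass_formula lam r n k w"
proof -
  have "tilted_mass lam r n k v \<le> tilted_mass lam r n k w"
    unfolding tilted_mass_def tilted_weight_def using assms(3) by (intro nn_integral_mono) auto
  then show ?thesis
    using tilted_mass_formula_nonneg assms by (simp add: tilted_mass_eq)
qed

lemma emeasure_exponential_min_greater:
  assumes "0 < lam" "0 \<le> w"
  shows "emeasure (exponential_measure lam) {y. w < min y r}
       = (if w < r then ennreal (exp (- w * lam)) else 0)"
proof (cases "w < r")
  case True
  then have "{y. w < min y r} = {w<..}" by auto
  then show ?thesis using True emeasure_exponential_greater[OF assms] by simp
qed simp

lemma ennreal_eq_diff_if_add:
  assumes "a + ennreal b = ennreal c" "0 \<le> b"
  shows "a = ennreal (c - b)"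
proof -
  have "a = a + ennreal b - ennreal b" by (simp add: ennreal_add_diff_cancel_right)
  also have "\<dots> = ennreal (c - b)" using assms by (simp add: ennreal_minus)
  finally show ?thesis .
qed

lemma tilted_mass_window:
  assumes lam: "0 < lam" and r: "0 < r"
  shows "(\<integral>\<^sup>+x. (if count_above r n x = real k \<and> t - r < trunc_sum r n x \<and> trunc_sum r n x \<le> t
             then ennreal (exp (lam * trunc_sum r n x)) else 0) \<partial>exponential_product lam n)
       = ennreal (tilted_mass_formula lam r n k t - tilted_mass_formula lam r n k (t - r))"
    (is "?J = _")
proof (rule ennreal_eq_diff_if_add)
  have "?J + tilted_mass lam r n k (t - r) = tilted_mass lam r n k t"
    unfolding tilted_mass_def tilted_weight_def exponential_product_def using r
    by (subst nn_integral_add[symmetric]) (auto intro!: nn_integral_cong)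
  then show "?J + ennreal (tilted_mass_formula lam r n k (t - r)) = ennreal (tilted_mass_formula lam r n k t)"
    by (simp add: tilted_mass_eq[OF lam r])
qed (use tilted_mass_formula_nonneg lam r in auto)

lemma nn_integral_exponential_overshoot:
  assumes lam: "0 < lam"
  shows "(\<integral>\<^sup>+y. (if P \<and> s \<le> t \<and> t < s + min y r then 1 else 0) \<partial>exponential_measure lam)
       = ennreal (exp (- lam * t)) * (if P \<and> t - r < s \<and> s \<le> t then ennreal (exp (lam * s)) else 0)"
proof (cases "P \<and> s \<le> t")
  case True
  have "(\<integral>\<^sup>+y. (if P \<and> s \<le> t \<and> t < s + min y r then 1 else 0) \<partial>exponential_measure lam)
      = (\<integral>\<^sup>+y. indicator {y. t - s < min y r} y \<partial>exponential_measure lam)"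
    using True by (intro nn_integral_cong) (auto simp: indicator_def)
  also have "\<dots> = emeasure (exponential_measure lam) {y. t - s < min y r}"
    by simp
  also have "\<dots> = (if t - s < r then ennreal (exp (- (t - s) * lam)) else 0)"
    by (rule emeasure_exponential_min_greater[OF lam]) (use True in simp)
  finally show ?thesis
    using True by (simp add: ennreal_mult'[symmetric] mult_exp_exp algebra_simps)
qed auto

lemma emeasure_last_renewal:
  assumes lam: "0 < lam" and r: "0 < r" and t: "0 \<le> t"
  shows "emeasure (exponential_product lam (Suc n))
      {x \<in> space (exponential_product lam (Suc n)).
         count_above r n x = real k \<and> trunc_sum r n x \<le> t \<and> t < trunc_sum r (Suc n) x}
    = ennreal (exp (- lam * t) * (tilted_mass_formula lam r n k t - tilted_mass_formula lam r n k (t - r)))"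
    (is "emeasure _ ?Q = _")
proof -
  define g where "g x = (if count_above r n x = real k \<and> trunc_sum r n x \<le> t \<and> t < trunc_sum r (Suc n) x
    then 1 else (0::ennreal))" for x
  have last_integral: "(\<integral>\<^sup>+y. g (x(n := y)) \<partial>exponential_measure lam) = ennreal (exp (- lam * t)) *
      (if count_above r n x = real k \<and> t - r < trunc_sum r n x \<and> trunc_sum r n x \<le> t
       then ennreal (exp (lam * trunc_sum r n x)) else 0)" for x
    unfolding g_def count_above_upd trunc_sum_upd trunc_sum_Suc_upd
    by (rule nn_integral_exponential_overshoot[OF lam])
  have "emeasure (exponential_product lam (Suc n)) ?Q
      = (\<integral>\<^sup>+x. indicator ?Q x \<partial>exponential_product lam (Suc n))"
    by (rule nn_integral_indicator[symmetric]) (unfold exponential_product_def, measurable)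
  also have "\<dots> = (\<integral>\<^sup>+x. g x \<partial>exponential_product lam (Suc n))"
    by (rule nn_integral_cong) (simp add: g_def indicator_def)
  also have "\<dots> = (\<integral>\<^sup>+x. (\<integral>\<^sup>+y. g (x(n := y)) \<partial>exponential_measure lam) \<partial>exponential_product lam n)"
    by (rule nn_integral_exponential_product_Suc[OF lam]) (unfold g_def exponential_product_def, measurable)
  also have "\<dots> = ennreal (exp (- lam * t)) *
      ennreal (tilted_mass_formula lam r n k t - tilted_mass_formula lam r n k (t - r))"
    unfolding last_integral tilted_mass_window[OF lam r, symmetric] exponential_product_def
    by (rule nn_integral_cmult) measurable
  finally show ?thesis
    by (simp add: ennreal_mult'[symmetric])
qed

lemma tilted_mass_formula_diff_eq:
  assumes r: "0 < r" and j: "real j * r \<le> t" "t < (real j + 1) * r" and kj: "k \<le> j"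
  shows "tilted_mass_formula lam r (k + l) k t - tilted_mass_formula lam r (k + l) k (t - r)
    = real ((k + l) choose k) *
      (\<Sum>i = 0..j - k. (-1) ^ i * real ((l + 1) choose i) * (lam * (t - real (i + k) * r)) ^ l / fact l)"
proof -
  define G where "G i = (-1)^i * real (Suc l choose i) * (lam ^ l * truncated_power l (t - real (i + k) * r))" for i
  have "tilted_mass_formula lam r (k + l) k t - tilted_mass_formula lam r (k + l) k (t - r)
      = real ((k + l) choose k) * (lam ^ l *
          (irwin_hall r l (t - real k * r) - irwin_hall r l (t - real k * r - r)))"
    unfolding tilted_mass_formula_def by (simp add: algebra_simps)
  also have "lam ^ l * (irwin_hall r l (t - real k * r) - irwin_hall r l (t - real k * r - r))
      = (\<Sum>i\<le>Suc l. G i)"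
    unfolding irwin_hall_diff G_def by (simp add: sum_distrib_left algebra_simps)
  also have "\<dots> = (\<Sum>i\<le>Suc l + (j - k). G i)"
    by (rule sum.mono_neutral_left) (auto simp: G_def)
  also have "\<dots> = (\<Sum>i = 0..j - k. G i)"
  proof (rule sum.mono_neutral_right)
    show "\<forall>i\<in>{..Suc l + (j - k)} - {0..j - k}. G i = 0"
    proof
      fix i assume "i \<in> {..Suc l + (j - k)} - {0..j - k}"
      then have "(real j + 1) * r \<le> real (i + k) * r"
        using kj r by (intro mult_right_mono) auto
      then show "G i = 0" using j by (simp add: G_def truncated_power_def)
    qed
  qed auto
  also have "\<dots> = (\<Sum>i = 0..j - k. (-1) ^ i * real ((l + 1) choose i) * (lam * (t - real (i + k) * r)) ^ l / fact l)"
  proof (rule sum.cong)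
    fix i assume "i \<in> {0..j - k}"
    then have "real (i + k) * r \<le> real j * r"
      using kj r by (intro mult_right_mono) auto
    then show "G i = (-1) ^ i * real ((l + 1) choose i) * (lam * (t - real (i + k) * r)) ^ l / fact l"
      using j by (simp add: G_def truncated_power_def power_mult_distrib)
  qed simp
  finally show ?thesis .
qed

section \<open>A Chernoff bound for the truncated partial sums\<close>

lemma nn_integral_exp_neg_min_le:
  assumes lam: "0 < lam" and r: "0 < r"
  shows "(\<integral>\<^sup>+y. ennreal (exp (- min y r)) \<partial>exponential_measure lam)
       \<le> ennreal (1 - (1 - exp (- r)) * exp (- r * lam))"
proof -
  interpret prob_space "exponential_measure lam"
    by (rule prob_space_exponential_measure[OF lam])
  have "(\<integral>\<^sup>+y. ennreal (exp (- min y r)) \<partial>exponential_measure lam)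
      \<le> (\<integral>\<^sup>+y. indicator {..r} y + ennreal (exp (- r)) * indicator {r<..} y \<partial>exponential_measure lam)"
  proof (rule nn_integral_mono_AE)
    have "AE y in exponential_measure lam. 0 \<le> y"
      unfolding exponential_measure_def
      by (subst AE_density) (auto simp: exponential_density_def)
    then show "AE y in exponential_measure lam.
        ennreal (exp (- min y r)) \<le> indicator {..r} y + ennreal (exp (- r)) * indicator {r<..} y"
      by eventually_elim (auto simp: indicator_def min_def)
  qed
  also have "\<dots> = emeasure (exponential_measure lam) {..r}
      + ennreal (exp (- r)) * emeasure (exponential_measure lam) {r<..}"
    by (subst nn_integral_add) (auto simp: nn_integral_cmult_indicator)
  also have "\<dots> = ennreal (1 - (1 - exp (- r)) * exp (- r * lam))"
  proof -
    have greater: "measure (exponential_measure lam) {r<..} = exp (- r * lam)"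
      using emeasure_exponential_greater[OF lam, of r] r by (simp add: emeasure_eq_measure)
    have "space (exponential_measure lam) - {r<..} = {..r}" by auto
    then have at_most: "measure (exponential_measure lam) {..r} = 1 - exp (- r * lam)"
      using prob_compl[of "{r<..}"] greater by simp
    have "exp (- r * lam) \<le> 1" using lam r by simp
    then show ?thesis
      unfolding emeasure_eq_measure greater at_most
      by (simp add: ennreal_mult'[symmetric] ennreal_plus[symmetric] algebra_simps del: ennreal_plus)
  qed
  finally show ?thesis .
qed

lemma emeasure_trunc_sum_le:
  assumes lam: "0 < lam"
  shows "emeasure (exponential_product lam m) {x \<in> space (exponential_product lam m). trunc_sum r m x \<le> t}
       \<le> ennreal (exp t) * (\<integral>\<^sup>+y. ennreal (exp (- min y r)) \<partial>exponential_measure lam) ^ m"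
proof -
  interpret product_sigma_finite "\<lambda>_::nat. exponential_measure lam"
    using prob_space_imp_sigma_finite[OF prob_space_exponential_measure[OF lam]]
    by (simp add: product_sigma_finite_def)
  have "emeasure (exponential_product lam m) {x \<in> space (exponential_product lam m). trunc_sum r m x \<le> t}
      = (\<integral>\<^sup>+x. indicator {x \<in> space (exponential_product lam m). trunc_sum r m x \<le> t} x
           \<partial>exponential_product lam m)"
    by (rule nn_integral_indicator[symmetric]) (unfold exponential_product_def, measurable)
  also have "\<dots> \<le> (\<integral>\<^sup>+x. ennreal (exp t) * (\<Prod>i<m. ennreal (exp (- min (x i) r)))
                    \<partial>exponential_product lam m)"
  proof (rule nn_integral_mono)
    fix x
    have "(\<Prod>i<m. ennreal (exp (- min (x i) r))) = ennreal (exp (- trunc_sum r m x))"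
      unfolding trunc_sum_def by (simp add: prod_ennreal exp_sum[symmetric] sum_negf)
    then have "ennreal (exp t) * (\<Prod>i<m. ennreal (exp (- min (x i) r))) = ennreal (exp (t - trunc_sum r m x))"
      by (simp add: ennreal_mult'[symmetric] exp_diff exp_minus field_simps)
    then show "indicator {x \<in> space (exponential_product lam m). trunc_sum r m x \<le> t} x
        \<le> ennreal (exp t) * (\<Prod>i<m. ennreal (exp (- min (x i) r)))"
      by (auto simp: indicator_def)
  qed
  also have "\<dots> = ennreal (exp t) * (\<integral>\<^sup>+y. ennreal (exp (- min y r)) \<partial>exponential_measure lam) ^ m"
    unfolding exponential_product_def
    by (subst nn_integral_cmult, measurable, subst product_nn_integral_prod) auto
  finally show ?thesis .
qed

lemma measure_trunc_sum_le_tendsto_zero: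
  assumes lam: "0 < lam" and r: "0 < r"
  shows "(\<lambda>m. measure (exponential_product lam m)
            {x \<in> space (exponential_product lam m). trunc_sum r m x \<le> t}) \<longlonglongrightarrow> 0"
proof (rule tendsto_sandwich[OF _ _ tendsto_const])
  define q where "q = 1 - (1 - exp (- r)) * exp (- r * lam)"
  have q: "0 \<le> q" "q < 1"
    using lam r by (auto simp: q_def intro!: mult_le_one)
  show "(\<lambda>m. exp t * q ^ m) \<longlonglongrightarrow> 0"
    using q by (intro tendsto_mult_right_zero LIMSEQ_power_zero) auto
  show "\<forall>\<^sub>F m in sequentially. measure (exponential_product lam m)
      {x \<in> space (exponential_product lam m). trunc_sum r m x \<le> t} \<le> exp t * q ^ m"
  proof (intro always_eventually allI)
    fix m
    interpret prob_space "exponential_product lam m"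
      by (rule prob_space_exponential_product[OF lam])
    have "emeasure (exponential_product lam m) {x \<in> space (exponential_product lam m). trunc_sum r m x \<le> t}
        \<le> ennreal (exp t) * ennreal q ^ m"
      using emeasure_trunc_sum_le[OF lam, of m r t]
        mult_left_mono[OF power_mono[OF nn_integral_exp_neg_min_le[OF lam r]], of "ennreal (exp t)" m]
      unfolding q_def by (auto intro: order_trans)
    then show "measure (exponential_product lam m)
        {x \<in> space (exponential_product lam m). trunc_sum r m x \<le> t} \<le> exp t * q ^ m"
      using q by (simp add: emeasure_eq_measure ennreal_power ennreal_mult'[symmetric])
  qed
qed (auto intro: always_eventually)

lemma card_less_filter_eq_sum: "real (card {i. i < (n::nat) \<and> P i}) = (\<Sum>i<n. if P i then 1 else 0)"
proof (induction n)
  case (Suc n)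
  have "{i. i < Suc n \<and> P i} = (if P n then insert n {i. i < n \<and> P i} else {i. i < n \<and> P i})"
    by (auto simp: less_Suc_eq)
  then show ?case using Suc by (simp add: sum.lessThan_Suc)
qed simp

lemma RaFT_A_D_iff:
  "RaFT_A X r t \<omega> = k \<and> RaFT_D X r t \<omega> = l \<longleftrightarrow>
     RaFT_N X r t \<omega> = k + l \<and> count_above r (k + l) (\<lambda>i. X i \<omega>) = real k"
proof -
  let ?N = "RaFT_N X r t \<omega>"
  have "card {i. i < ?N \<and> r < X i \<omega>} + card {i. i < ?N \<and> X i \<omega> \<le> r}
      = card ({i. i < ?N \<and> r < X i \<omega>} \<union> {i. i < ?N \<and> X i \<omega> \<le> r})"
    by (rule card_Un_disjoint[symmetric]) auto
  also have "{i. i < ?N \<and> r < X i \<omega>} \<union> {i. i < ?N \<and> X i \<omega> \<le> r} = {..<?N}"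
    by auto
  finally have sum: "RaFT_A X r t \<omega> + RaFT_D X r t \<omega> = ?N"
    unfolding RaFT_A_def RaFT_D_def by simp
  have count: "real (RaFT_A X r t \<omega>) = count_above r ?N (\<lambda>i. X i \<omega>)"
    unfolding RaFT_A_def count_above_def by (rule card_less_filter_eq_sum)
  show ?thesis
  proof
    assume "RaFT_A X r t \<omega> = k \<and> RaFT_D X r t \<omega> = l"
    with sum count show "?N = k + l \<and> count_above r (k + l) (\<lambda>i. X i \<omega>) = real k"
      by simp
  next
    assume "?N = k + l \<and> count_above r (k + l) (\<lambda>i. X i \<omega>) = real k"
    with sum count show "RaFT_A X r t \<omega> = k \<and> RaFT_D X r t \<omega> = l"
      by simp
  qed
qed

lemma RaFT_N_eq_iff:
  assumes "0 \<le> t"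
  shows "RaFT_N X r t \<omega> = n \<longleftrightarrow>
    (trunc_sum r n (\<lambda>i. X i \<omega>) \<le> t \<and> (\<forall>m. trunc_sum r m (\<lambda>i. X i \<omega>) \<le> t \<longrightarrow> m \<le> n))
    \<or> (n = 0 \<and> (\<forall>m0. \<exists>m\<ge>m0. trunc_sum r m (\<lambda>i. X i \<omega>) \<le> t))"
proof -
  define S where "S = {n. trunc_sum r n (\<lambda>i. X i \<omega>) \<le> t}"
  have "0 \<in> S" using assms by (simp add: S_def trunc_sum_def)
  have N: "RaFT_N X r t \<omega> = (if finite S then Max S else 0)"
    unfolding RaFT_N_def S_def trunc_sum_def by simp
  show ?thesis
  proof (cases "finite S")
    case True
    then have "Max S = n \<longleftrightarrow> n \<in> S \<and> (\<forall>m\<in>S. m \<le> n)"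
      using \<open>0 \<in> S\<close> by (subst Max_eq_iff) auto
    moreover have "\<not> (\<forall>m0. \<exists>m\<ge>m0. m \<in> S)"
      using True by (metis finite_nat_set_iff_bounded_le not_less_eq_eq)
    ultimately show ?thesis using True unfolding N S_def by auto
  next
    case False
    then have "\<forall>m0. \<exists>m\<ge>m0. m \<in> S" "\<not> (\<forall>m\<in>S. m \<le> n)"
      using finite_nat_set_iff_bounded_le by (metis nle_le, blast)
    then show ?thesis using False unfolding N S_def by auto
  qed
qed

lemma RaFT_N_eq_iff_of_exceeds:
  assumes "0 \<le> r" "0 \<le> t" and nonneg: "\<forall>i. 0 \<le> X i \<omega>"
    and exceeds: "t < trunc_sum r m (\<lambda>i. X i \<omega>)"
  shows "RaFT_N X r t \<omega> = n \<longleftrightarrow>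
    trunc_sum r n (\<lambda>i. X i \<omega>) \<le> t \<and> t < trunc_sum r (Suc n) (\<lambda>i. X i \<omega>)"
proof -
  define S where "S a = trunc_sum r a (\<lambda>i. X i \<omega>)" for a
  have mono: "a \<le> b \<Longrightarrow> S a \<le> S b" for a b
    unfolding S_def using trunc_sum_mono[OF assms(1) nonneg] .
  have "\<not> (\<forall>m0. \<exists>m'\<ge>m0. S m' \<le> t)"
  proof
    assume "\<forall>m0. \<exists>m'\<ge>m0. S m' \<le> t"
    then obtain m' where "m \<le> m'" "S m' \<le> t" by blast
    then show False using exceeds mono[of m m'] by (simp add: S_def)
  qed
  moreover have "(\<forall>m'. S m' \<le> t \<longrightarrow> m' \<le> n) \<longleftrightarrow> t < S (Suc n)"
  proof
    assume "\<forall>m'. S m' \<le> t \<longrightarrow> m' \<le> n"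
    then show "t < S (Suc n)" by (metis Suc_n_not_le_n not_le)
  next
    assume "t < S (Suc n)"
    then show "\<forall>m'. S m' \<le> t \<longrightarrow> m' \<le> n"
      using mono by (metis not_less_eq_eq order.trans not_le)
  qed
  ultimately show ?thesis
    unfolding RaFT_N_eq_iff[OF assms(2)] S_def by blast
qed

lemma measurable_RaFT_N:
  assumes rv: "\<And>i. X i \<in> borel_measurable M" and "0 \<le> t"
  shows "RaFT_N X r t \<in> measurable M (count_space UNIV)"
proof (subst measurable_count_space_eq2_countable, intro conjI ballI)
  note rv[measurable]
  fix n :: nat
  have "RaFT_N X r t -` {n} \<inter> space M = {\<omega> \<in> space M.
    (trunc_sum r n (\<lambda>i. X i \<omega>) \<le> t \<and> (\<forall>m. trunc_sum r m (\<lambda>i. X i \<omega>) \<le> t \<longrightarrow> m \<le> n))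
    \<or> (n = 0 \<and> (\<forall>m0. \<exists>m\<ge>m0. trunc_sum r m (\<lambda>i. X i \<omega>) \<le> t))}"
    unfolding vimage_def Int_def singleton_iff RaFT_N_eq_iff[OF assms(2)] by blast
  also have "\<dots> \<in> sets M"
    unfolding trunc_sum_def by measurable
  finally show "RaFT_N X r t -` {n} \<inter> space M \<in> sets M" .
qed simp

section \<open>Transfer to the product space\<close>

lemma count_above_restrict: "m \<le> n \<Longrightarrow> count_above r m (restrict x {..<n}) = count_above r m x"
  unfolding count_above_def by (intro sum.cong) auto

lemma trunc_sum_restrict: "m \<le> n \<Longrightarrow> trunc_sum r m (restrict x {..<n}) = trunc_sum r m x"
  unfolding trunc_sum_def by (intro sum.cong) auto

lemma emeasure_exponential_vector:
  assumes "prob_space M" and ind: "prob_space.indep_vars M (\<lambda>_. borel) X UNIV"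
    and dist: "\<And>i. distributed M lborel (X i) (exponential_density lam)"
    and S: "S \<in> sets (exponential_product lam (Suc n))"
  shows "emeasure M {\<omega> \<in> space M. (\<lambda>i\<in>{..<Suc n}. X i \<omega>) \<in> S}
       = emeasure (exponential_product lam (Suc n)) S"
proof -
  interpret prob_space M by fact
  have rv: "\<And>i. X i \<in> borel_measurable M"
    using distributed_measurable[OF dist] by simp
  have law: "distr M borel (X i) = exponential_measure lam" for i
  proof -
    have "distr M borel (X i) = distr M lborel (X i)" by (rule distr_cong) auto
    also have "\<dots> = exponential_measure lam"
      unfolding exponential_measure_def by (rule distributed_distr_eq_density[OF dist])
    finally show ?thesis .
  qed
  have "indep_vars (\<lambda>_. borel) X {..<Suc n}"
    using indep_vars_subset[OF ind] by auto
  then have joint: "distr M (\<Pi>\<^sub>M i\<in>{..<Suc n}. borel) (\<lambda>\<omega>. \<lambda>i\<in>{..<Suc n}. X i \<omega>)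
      = exponential_product lam (Suc n)"
    using indep_vars_iff_distr_eq_PiM[where I="{..<Suc n}" and M'="\<lambda>_. borel" and X=X] rv
    by (auto simp: law exponential_product_def)
  have "S \<in> sets (\<Pi>\<^sub>M i\<in>{..<Suc n}. (borel :: real measure))"
    using S unfolding exponential_product_def by (simp add: sets_PiM_cong[OF refl sets_exponential_measure])
  then have "emeasure (exponential_product lam (Suc n)) S
      = emeasure M ((\<lambda>\<omega>. \<lambda>i\<in>{..<Suc n}. X i \<omega>) -` S \<inter> space M)"
    unfolding joint[symmetric] using rv by (intro emeasure_distr) measurable
  also have "(\<lambda>\<omega>. \<lambda>i\<in>{..<Suc n}. X i \<omega>) -` S \<inter> space M = {\<omega> \<in> space M. (\<lambda>i\<in>{..<Suc n}. X i \<omega>) \<in> S}"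
    by auto
  finally show ?thesis ..
qed

lemma AE_exponential_nonneg:
  fixes X :: "nat \<Rightarrow> 'a \<Rightarrow> real"
  assumes "prob_space M" and dist: "\<And>i. distributed M lborel (X i) (exponential_density lam)"
    and lam: "0 < lam"
  shows "AE \<omega> in M. \<forall>i. 0 \<le> X i \<omega>"
proof -
  interpret prob_space M by fact
  have "AE \<omega> in M. 0 \<le> X i \<omega>" for i
  proof -
    have [measurable]: "X i \<in> borel_measurable M"
      using distributed_measurable[OF dist] by simp
    have "prob {\<omega> \<in> space M. X i \<omega> \<le> 0} = 0"
      using exponential_distributedD_le[OF dist _ lam, of 0] by simp
    moreover have "{\<omega> \<in> space M. X i \<omega> \<le> 0} \<in> events"
      by measurable
    ultimately show ?thesis
      by (intro AE_I'[of "{\<omega> \<in> space M. X i \<omega> \<le> 0}"]) (auto simp: null_sets_def emeasure_eq_measure)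
  qed
  then show ?thesis
    by (simp add: AE_all_countable)
qed

lemma null_sets_trunc_sums_bounded:
  assumes "prob_space M" and ind: "prob_space.indep_vars M (\<lambda>_. borel) X UNIV"
    and dist: "\<And>i. distributed M lborel (X i) (exponential_density lam)"
    and lam: "0 < lam" and r: "0 < r"
  shows "{\<omega> \<in> space M. \<forall>m. trunc_sum r m (\<lambda>i. X i \<omega>) \<le> t} \<in> null_sets M"
proof -
  interpret prob_space M by fact
  have rv[measurable]: "\<And>i. X i \<in> borel_measurable M"
    using distributed_measurable[OF dist] by simp
  define B where "B = {\<omega> \<in> space M. \<forall>m. trunc_sum r m (\<lambda>i. X i \<omega>) \<le> t}"
  have B_sets: "B \<in> sets M"
    unfolding B_def trunc_sum_def by measurable
  have bound: "measure M B \<le> measure (exponential_product lam (Suc m))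
      {x \<in> space (exponential_product lam (Suc m)). trunc_sum r (Suc m) x \<le> t}" for m
  proof -
    let ?S = "{x \<in> space (exponential_product lam (Suc m)). trunc_sum r (Suc m) x \<le> t}"
    have S_sets: "?S \<in> sets (exponential_product lam (Suc m))"
      unfolding exponential_product_def by measurable
    have "measure M B \<le> measure M {\<omega> \<in> space M. (\<lambda>i\<in>{..<Suc m}. X i \<omega>) \<in> ?S}"
    proof (rule finite_measure_mono)
      show "B \<subseteq> {\<omega> \<in> space M. (\<lambda>i\<in>{..<Suc m}. X i \<omega>) \<in> ?S}"
        by (auto simp: B_def trunc_sum_restrict exponential_product_def space_PiM)
      show "{\<omega> \<in> space M. (\<lambda>i\<in>{..<Suc m}. X i \<omega>) \<in> ?S} \<in> sets M"
        unfolding exponential_product_def by measurable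
    qed
    also have "\<dots> = measure (exponential_product lam (Suc m)) ?S"
      unfolding measure_def
      by (subst emeasure_exponential_vector[OF \<open>prob_space M\<close> ind dist S_sets]) (rule refl)
    finally show ?thesis .
  qed
  have "measure M B \<le> 0"
    using LIMSEQ_Suc[OF measure_trunc_sum_le_tendsto_zero[OF lam r]]
    by (rule LIMSEQ_le_const) (use bound in blast)
  then show ?thesis
    using B_sets unfolding B_def[symmetric]
    by (simp add: null_sets_def emeasure_eq_measure measure_le_0_iff)
qed

lemma AE_nonneg_trunc_sum_exceeds:
  assumes "prob_space M" and ind: "prob_space.indep_vars M (\<lambda>_. borel) X UNIV"
    and dist: "\<And>i. distributed M lborel (X i) (exponential_density lam)"
    and lam: "0 < lam" and r: "0 < r"
  shows "AE \<omega> in M. (\<forall>i. 0 \<le> X i \<omega>) \<and> (\<exists>m. t < trunc_sum r m (\<lambda>i. X i \<omega>))"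
  using AE_exponential_nonneg[OF assms(1) dist lam] AE_space
    AE_not_in[OF null_sets_trunc_sums_bounded[OF assms, of t]]
  by eventually_elim (auto simp: not_le)

lemma measure_RaFT_A_D_eq:
  assumes "prob_space M" and ind: "prob_space.indep_vars M (\<lambda>_. borel) X UNIV"
    and dist: "\<And>i. distributed M lborel (X i) (exponential_density lam)"
    and lam: "0 < lam" and r: "0 < r" and t: "0 \<le> t"
  shows "measure M {\<omega> \<in> space M. RaFT_A X r t \<omega> = k \<and> RaFT_D X r t \<omega> = l}
    = measure (exponential_product lam (Suc (k + l))) {x \<in> space (exponential_product lam (Suc (k + l))).
        count_above r (k + l) x = real k \<and> trunc_sum r (k + l) x \<le> t \<and> t < trunc_sum r (Suc (k + l)) x}"
    (is "_ = measure _ ?Q")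
proof -
  interpret prob_space M by fact
  have rv[measurable]: "\<And>i. X i \<in> borel_measurable M"
    using distributed_measurable[OF dist] by simp
  have [measurable]: "RaFT_N X r t \<in> measurable M (count_space UNIV)"
    by (rule measurable_RaFT_N[OF rv t])
  have Q_sets: "?Q \<in> sets (exponential_product lam (Suc (k + l)))"
    unfolding exponential_product_def by measurable
  have "AE \<omega> in M. \<omega> \<in> {\<omega> \<in> space M. RaFT_A X r t \<omega> = k \<and> RaFT_D X r t \<omega> = l}
      \<longleftrightarrow> \<omega> \<in> {\<omega> \<in> space M. (\<lambda>i\<in>{..<Suc (k + l)}. X i \<omega>) \<in> ?Q}"
    using AE_nonneg_trunc_sum_exceeds[OF assms(1-5), of t]
  proof eventually_elim
    case (elim \<omega>)
    then obtain m where "\<forall>i. 0 \<le> X i \<omega>" "t < trunc_sum r m (\<lambda>i. X i \<omega>)"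
      by blast
    with r t have "RaFT_N X r t \<omega> = k + l \<longleftrightarrow>
        trunc_sum r (k + l) (\<lambda>i. X i \<omega>) \<le> t \<and> t < trunc_sum r (Suc (k + l)) (\<lambda>i. X i \<omega>)"
      by (intro RaFT_N_eq_iff_of_exceeds) auto
    moreover have "(\<lambda>i\<in>{..<Suc (k + l)}. X i \<omega>) \<in> space (exponential_product lam (Suc (k + l)))"
      by (simp add: exponential_product_def space_PiM)
    ultimately show ?case
      unfolding RaFT_A_D_iff by (auto simp: count_above_restrict trunc_sum_restrict)
  qed
  moreover have "{\<omega> \<in> space M. RaFT_A X r t \<omega> = k \<and> RaFT_D X r t \<omega> = l} \<in> sets M"
    unfolding RaFT_A_D_iff count_above_def by measurable
  moreover have "{\<omega> \<in> space M. (\<lambda>i\<in>{..<Suc (k + l)}. X i \<omega>) \<in> ?Q} \<in> sets M"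
    using Q_sets unfolding exponential_product_def by measurable
  ultimately have "measure M {\<omega> \<in> space M. RaFT_A X r t \<omega> = k \<and> RaFT_D X r t \<omega> = l}
      = measure M {\<omega> \<in> space M. (\<lambda>i\<in>{..<Suc (k + l)}. X i \<omega>) \<in> ?Q}"
    by (rule measure_eq_AE)
  also have "\<dots> = measure (exponential_product lam (Suc (k + l))) ?Q"
    unfolding measure_def
    by (subst emeasure_exponential_vector[OF \<open>prob_space M\<close> ind dist Q_sets]) (rule refl)
  finally show ?thesis .
qed

theorem mainTheorem3:
  fixes M :: "'a measure" and X :: "nat \<Rightarrow> 'a \<Rightarrow> real"
    and lam r t :: real and j k l :: nat
  assumes "prob_space M"
    and "prob_space.indep_vars M (\<lambda>_. borel) X UNIV"
    and "\<And>i. distributed M lborel (X i) (exponential_density lam)"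
    and "lam > 0" and "r > 0"
    and "real j * r \<le> t" and "t < (real j + 1) * r"
    and "k \<le> j"
  shows "measure M {\<omega> \<in> space M. RaFT_A X r t \<omega> = k \<and> RaFT_D X r t \<omega> = l}
    = exp (- lam * t) * real ((k + l) choose k) *
      (\<Sum>i = 0..j - k. (-1) ^ i * real ((l + 1) choose i) *
         (lam * (t - real (i + k) * r)) ^ l / fact l)"
proof -
  note lam = assms(4) and r = assms(5)
  have t: "0 \<le> t"
    using mult_nonneg_nonneg[of "real j" r] assms(5,6) by linarith
  have "measure M {\<omega> \<in> space M. RaFT_A X r t \<omega> = k \<and> RaFT_D X r t \<omega> = l}
      = exp (- lam * t) *
        (tilted_mass_formula lam r (k + l) k t - tilted_mass_formula lam r (k + l) k (t - r))"
    using measure_RaFT_A_D_eq[OF assms(1-5) t] emeasure_last_renewal[OF lam r t]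
      tilted_mass_formula_mono[OF lam r, of "t - r" t] r
    by (simp add: measure_def)
  then show ?thesis
    unfolding tilted_mass_formula_diff_eq[OF r assms(6-8)] by simp
qed

end
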